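(* Let $x\ge0$. Then for all $\alpha,\lambda\in[0,1]$, \[ 0\le\log\frac{1+\lambda x+(1+\sqrt{1-\alpha}\,x)^\lambda-(1+\lambda\sqrt{1-\alpha}\,x)}{(1+x)^\lambda}\le\alpha\frac{\lambda(1-\lambda)}{2}x^2 . \] *)

theory Defs
  imports Complex_Main
begin

end

theory Submission
  imports Defs
begin

text \<open>With \<open>y = \<surd>(1 - \<alpha>) x \<in> [0, x]\<close> and \<open>N u = (1 + u) powr \<lambda> + \<lambda> (x - u)\<close>, the quantity
  is \<open>ln (N y / N x)\<close>. Concavity of \<open>(1 + u) powr \<lambda>\<close> makes \<open>N\<close> decreasing on \<open>[0, x]\<close>,
  which gives the lower bound and \<open>N \<ge> N x \<ge> 1\<close> there. Bernoulli's inequality bounds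
  \<open>-N' u = \<lambda> (1 - (1 + u) powr (\<lambda> - 1))\<close> by \<open>\<lambda> (1 - \<lambda>) u\<close>, so \<open>ln N u + \<lambda> (1 - \<lambda>) u\<^sup>2 / 2\<close> is
  increasing, and comparing its values at \<open>y\<close> and \<open>x\<close> gives the upper bound, because
  \<open>x\<^sup>2 - y\<^sup>2 = \<alpha> x\<^sup>2\<close>.\<close>

lemma has_real_derivative_one_plus_powr:
  fixes t e :: real
  assumes "t > -1"
  shows "((\<lambda>u. (1 + u) powr e) has_real_derivative e * (1 + t) powr (e - 1)) (at t)"
  using assms DERIV_fun_powr[of "\<lambda>u. 1 + u" 1 t e] by (auto intro!: derivative_eq_intros)

lemma one_plus_powr_le_one:
  fixes t e :: real
  assumes "t \<ge> 0" "e \<le> 0"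
  shows "(1 + t) powr e \<le> 1"
  using assms powr_mono[of e 0 "1 + t"] by simp

lemma bernoulli_powr_nonpos:
  fixes t e :: real
  assumes "t \<ge> 0" "e \<le> 0"
  shows "1 + e * t \<le> (1 + t) powr e"
proof -
  let ?f = "\<lambda>u. (1 + u) powr e - e * u"
  have "?f 0 \<le> ?f t"
  proof (rule DERIV_nonneg_imp_nondecreasing[OF assms(1)])
    fix u :: real
    assume u: "0 \<le> u" "u \<le> t"
    have "(?f has_real_derivative e * (1 + u) powr (e - 1) - e * 1) (at u)"
      using u by (intro DERIV_diff has_real_derivative_one_plus_powr DERIV_cmult DERIV_ident) auto
    moreover have "0 \<le> e * (1 + u) powr (e - 1) - e * 1"
      using one_plus_powr_le_one[of u "e - 1"] u assms by (simp add: mult_le_cancel_left1)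
    ultimately show "\<exists>d. (?f has_real_derivative d) (at u) \<and> 0 \<le> d"
      by blast
  qed
  then show ?thesis
    by simp
qed

lemma one_plus_powr_minus_linear_antimono:
  fixes x y l :: real
  assumes "0 \<le> y" "y \<le> x" "0 \<le> l" "l \<le> 1"
  shows "(1 + x) powr l - l * x \<le> (1 + y) powr l - l * y"
proof -
  let ?f = "\<lambda>u. (1 + u) powr l - l * u"
  have "?f x \<le> ?f y"
  proof (rule DERIV_nonpos_imp_nonincreasing[OF assms(2)])
    fix u :: real
    assume u: "y \<le> u" "u \<le> x"
    have "(?f has_real_derivative l * (1 + u) powr (l - 1) - l * 1) (at u)"
      using u assms by (intro DERIV_diff has_real_derivative_one_plus_powr DERIV_cmult DERIV_ident) auto
    moreover have "l * (1 + u) powr (l - 1) - l * 1 \<le> 0"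
      using one_plus_powr_le_one[of u "l - 1"] u assms by (simp add: mult_left_le)
    ultimately show "\<exists>d. (?f has_real_derivative d) (at u) \<and> d \<le> 0"
      by blast
  qed
  then show ?thesis
    by simp
qed

lemma ln_powr_interpolation_nonneg:
  fixes x y l :: real
  assumes "0 \<le> y" "y \<le> x" "0 \<le> l" "l \<le> 1"
  shows "0 \<le> ln (((1 + y) powr l + l * (x - y)) / (1 + x) powr l)"
proof -
  have "1 \<le> (1 + x) powr l"
    using assms powr_mono[of 0 l "1 + x"] by simp
  moreover have "(1 + x) powr l \<le> (1 + y) powr l + l * (x - y)"
    using one_plus_powr_minus_linear_antimono[OF assms] by (simp add: algebra_simps)
  ultimately show ?thesis
    using assms by (intro ln_ge_zero) (simp add: le_divide_eq)
qed

lemma ln_powr_interpolation_le: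
  fixes x y l :: real
  assumes "0 \<le> y" "y \<le> x" "0 \<le> l" "l \<le> 1"
  shows "ln (((1 + y) powr l + l * (x - y)) / (1 + x) powr l) \<le> l * (1 - l) / 2 * (x\<^sup>2 - y\<^sup>2)"
proof -
  define N where "N u = (1 + u) powr l + l * (x - u)" for u
  define c where "c = l * (1 - l) / 2"
  have D_ge_1: "1 \<le> (1 + x) powr l"
    using assms powr_mono[of 0 l "1 + x"] by simp
  have N_ge_D: "(1 + x) powr l \<le> N u" if "0 \<le> u" "u \<le> x" for u
    using one_plus_powr_minus_linear_antimono[OF that assms(3,4)] by (simp add: N_def algebra_simps)
  have "ln (N y) + c * y\<^sup>2 \<le> ln (N x) + c * x\<^sup>2"
  proof (rule DERIV_nonneg_imp_nondecreasing[OF assms(2)])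
    fix u :: real
    assume u: "y \<le> u" "u \<le> x"
    then have "0 \<le> u"
      using assms by simp
    have N_ge_1: "1 \<le> N u"
      using N_ge_D[OF \<open>0 \<le> u\<close> u(2)] D_ge_1 by simp
    define q where "q = 1 - (1 + u) powr (l - 1)"
    have "(N has_real_derivative -(l * q)) (at u)"
    proof -
      have "(N has_real_derivative l * (1 + u) powr (l - 1) + l * (0 - 1)) (at u)"
        unfolding N_def[abs_def] using \<open>0 \<le> u\<close>
        by (intro DERIV_add has_real_derivative_one_plus_powr DERIV_cmult DERIV_diff DERIV_const
            DERIV_ident) auto
      then show ?thesis
        by (simp add: q_def algebra_simps)
    qed
    then have deriv: "((\<lambda>u. ln (N u) + c * u\<^sup>2) has_real_derivative
        -(l * q) / N u + c * (2 * u)) (at u)"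
      using N_ge_1 by (auto intro!: derivative_eq_intros)
    have "0 \<le> l * q"
      using one_plus_powr_le_one[OF \<open>0 \<le> u\<close>, of "l - 1"] assms by (simp add: q_def)
    then have "l * q / N u \<le> l * q"
      using N_ge_1 by (simp add: divide_le_eq mult_le_cancel_left1)
    also have "\<dots> \<le> l * ((1 - l) * u)"
      using bernoulli_powr_nonpos[OF \<open>0 \<le> u\<close>, of "l - 1"] assms
      by (intro mult_left_mono) (auto simp: q_def algebra_simps)
    also have "\<dots> = c * (2 * u)"
      by (simp add: c_def)
    finally have "0 \<le> -(l * q) / N u + c * (2 * u)"
      by simp
    with deriv show "\<exists>d. ((\<lambda>u. ln (N u) + c * u\<^sup>2) has_real_derivative d) (at u) \<and> 0 \<le> d"
      by blast
  qed
  moreover have "ln (N x) = ln ((1 + x) powr l)"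
    by (simp add: N_def)
  moreover have "ln (N y / (1 + x) powr l) = ln (N y) - ln ((1 + x) powr l)"
    using N_ge_D[OF assms(1,2)] D_ge_1 by (intro ln_divide_pos) auto
  ultimately have "ln (N y / (1 + x) powr l) \<le> c * (x\<^sup>2 - y\<^sup>2)"
    unfolding right_diff_distrib by linarith
  then show ?thesis
    by (simp add: N_def c_def)
qed

theorem lemma2p6:
  fixes x a l :: real
  assumes "x \<ge> 0"
    and "0 \<le> a" "a \<le> 1"
    and "0 \<le> l" "l \<le> 1"
  shows "0 \<le> ln ((1 + l * x + (1 + sqrt (1 - a) * x) powr l - (1 + l * sqrt (1 - a) * x))
                  / (1 + x) powr l)
       \<and> ln ((1 + l * x + (1 + sqrt (1 - a) * x) powr l - (1 + l * sqrt (1 - a) * x))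
                  / (1 + x) powr l) \<le> a * (l * (1 - l) / 2) * x ^ 2"
proof -
  define y where "y = sqrt (1 - a) * x"
  have y: "0 \<le> y" "y \<le> x"
    using assms by (auto simp: y_def mult_left_le_one_le)
  have numerator: "1 + l * x + (1 + sqrt (1 - a) * x) powr l - (1 + l * sqrt (1 - a) * x)
      = (1 + y) powr l + l * (x - y)"
    by (simp add: y_def algebra_simps)
  have "x\<^sup>2 - y\<^sup>2 = a * x\<^sup>2"
    using assms by (simp add: y_def power_mult_distrib algebra_simps)
  then have "ln (((1 + y) powr l + l * (x - y)) / (1 + x) powr l) \<le> a * (l * (1 - l) / 2) * x ^ 2"
    using ln_powr_interpolation_le[OF y assms(4,5)] by (simp add: ac_simps)
  then show ?thesis
    using ln_powr_interpolation_nonneg[OF y assms(4,5)] unfolding numerator by simp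
qed

end
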